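(* Let $\rho \in (-\tfrac{1}{3},0)\cup (0,1)$ and let $\{a_t\}_{t\ge0}$, $\{b_t\}_{t\ge0}$ be sequences satisfying $a_0=b_0=0$, $a_1=b_1$, and $a_{t+1} = \rho(2a_t -a_{t-1}) + b_t - b_{t-1}$ for all $t\geq 1$. Set $\beta_s=b_s-b_{s-1}$, $u=\rho+\sqrt{\rho^2-\rho}$ and $v=\rho-\sqrt{\rho^2-\rho}$ (complex numbers when $0<\rho<1$). Then for all $t\ge0$, $$a_{t+1} = a_1\,\frac{u^{t+1}-v^{t+1}}{u-v} + \sum_{s=1}^t\beta_s\,\frac{u^{t-s+1}-v^{t-s+1}}{u-v}.$$ Moreover, if $0<\rho<1$, then with $\theta=\arccos(\sqrt{\rho})$, for all $t\ge0$, $$a_{t+1}\sin{\theta} = a_1\rho^{t/2}\sin{[(t+1)\theta]} + \sum_{s=1}^t\beta_s\rho^{(t-s)/2}\sin{[(t+1-s)\theta]}.$$ *)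

theory Defs
  imports Complex_Main
begin

end

theory Submission
  imports Defs
begin

text \<open>The sequence \<open>a\<close> solves the second-order linear recurrence with characteristic polynomial
  \<open>x\<^sup>2 - 2\<rho>x + \<rho>\<close>, driven by the increments \<open>\<beta>\<close> of \<open>b\<close>. Its solution is the convolution of the
  forcing with the fundamental solution of the homogeneous recurrence, the Lucas sequence
  \<open>U\<^sub>n(2\<rho>, \<rho>)\<close>. Binet's formula writes \<open>U\<^sub>n\<close> through the characteristic roots \<open>u, v\<close>, which are
  distinct because \<open>\<rho>\<^sup>2 \<noteq> \<rho>\<close>. For \<open>0 < \<rho> < 1\<close> the roots are \<open>\<surd>\<rho> e\<^sup>\<plusminus>\<^sup>i\<^sup>\<theta>\<close> with
  \<open>cos \<theta> = \<surd>\<rho>\<close>, and \<open>U\<^sub>n sin \<theta> = \<surd>\<rho>\<^sup>n\<^sup>-\<^sup>1 sin (n\<theta>)\<close>.\<close>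

fun lucas_U :: "'a::comm_ring_1 \<Rightarrow> 'a \<Rightarrow> nat \<Rightarrow> 'a" where
  "lucas_U P Q 0 = 0"
| "lucas_U P Q (Suc 0) = 1"
| "lucas_U P Q (Suc (Suc n)) = P * lucas_U P Q (Suc n) - Q * lucas_U P Q n"

lemma lucas_U_Binet:
  fixes u v :: "'a::field"
  assumes "u \<noteq> v"
  shows "lucas_U (u + v) (u * v) n = (u ^ n - v ^ n) / (u - v)"
proof (induction n rule: induct_nat_012)
  case (ge2 n)
  have "lucas_U (u + v) (u * v) (Suc (Suc n))
        = (u + v) * ((u ^ Suc n - v ^ Suc n) / (u - v)) - u * v * ((u ^ n - v ^ n) / (u - v))"
    by (simp only: lucas_U.simps ge2)
  also have "\<dots> = ((u + v) * (u ^ Suc n - v ^ Suc n) - u * v * (u ^ n - v ^ n)) / (u - v)"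
    by (simp only: times_divide_eq_right diff_divide_distrib[symmetric])
  also have "\<dots> = (u ^ Suc (Suc n) - v ^ Suc (Suc n)) / (u - v)"
    by (simp add: algebra_simps)
  finally show ?case .
qed (use assms in simp_all)

lemma of_real_lucas_U: "of_real (lucas_U P Q n) = lucas_U (of_real P) (of_real Q) n"
  by (induction P Q n rule: lucas_U.induct) simp_all

lemma lucas_U_sin:
  fixes r \<theta> :: real
  shows "lucas_U (2 * r * cos \<theta>) (r\<^sup>2) (Suc n) * sin \<theta> = r ^ n * sin (real (Suc n) * \<theta>)"
proof (induction n rule: induct_nat_012)
  case 1
  then show ?case by (simp add: sin_double)
next
  case (ge2 n)
  let ?U = "lucas_U (2 * r * cos \<theta>) (r\<^sup>2)"
  have sin_step: "sin (real (Suc (Suc (Suc n))) * \<theta>)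
        = 2 * cos \<theta> * sin (real (Suc (Suc n)) * \<theta>) - sin (real (Suc n) * \<theta>)"
    using sin_add[of "real (Suc (Suc n)) * \<theta>" \<theta>] sin_diff[of "real (Suc (Suc n)) * \<theta>" \<theta>]
    by (simp add: algebra_simps)
  have "?U (Suc (Suc (Suc n))) * sin \<theta>
        = 2 * r * cos \<theta> * (?U (Suc (Suc n)) * sin \<theta>) - r\<^sup>2 * (?U (Suc n) * sin \<theta>)"
    by (simp only: lucas_U.simps) (simp add: algebra_simps)
  also have "\<dots> = r ^ Suc (Suc n) * (2 * cos \<theta> * sin (real (Suc (Suc n)) * \<theta>) - sin (real (Suc n) * \<theta>))"
    by (simp only: ge2) (simp add: algebra_simps power2_eq_square)
  finally show ?case
    by (simp only: sin_step)
qed simp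

lemma lucas_U_convolution_step:
  "(\<Sum>s=1..n+2. f s * lucas_U P Q (n + 3 - s))
   = P * (\<Sum>s=1..n+1. f s * lucas_U P Q (n + 2 - s)) - Q * (\<Sum>s=1..n. f s * lucas_U P Q (n + 1 - s))
     + f (n + 2)"
proof -
  have "(\<Sum>s=1..n+1. f s * lucas_U P Q (n + 3 - s))
        = (\<Sum>s=1..n+1. P * (f s * lucas_U P Q (n + 2 - s)) - Q * (f s * lucas_U P Q (n + 1 - s)))"
  proof (rule sum.cong)
    fix s assume "s \<in> {1..n+1}"
    then have "n + 3 - s = Suc (Suc (n + 1 - s))" "n + 2 - s = Suc (n + 1 - s)" by auto
    then show "f s * lucas_U P Q (n + 3 - s)
               = P * (f s * lucas_U P Q (n + 2 - s)) - Q * (f s * lucas_U P Q (n + 1 - s))"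
      by (simp add: algebra_simps)
  qed simp
  moreover have "(\<Sum>s=1..n+1. f s * lucas_U P Q (n + 1 - s)) = (\<Sum>s=1..n. f s * lucas_U P Q (n + 1 - s))"
    by simp
  ultimately show ?thesis
    by (simp add: sum_subtractf sum_distrib_left eval_nat_numeral algebra_simps)
qed

lemma linear_recurrence_solution:
  fixes a f :: "nat \<Rightarrow> 'a::comm_ring_1"
  assumes a0: "a 0 = 0"
    and rec: "\<And>t. t \<ge> 1 \<Longrightarrow> a (t + 1) = P * a t - Q * a (t - 1) + f t"
  shows "a (t + 1) = a 1 * lucas_U P Q (t + 1) + (\<Sum>s=1..t. f s * lucas_U P Q (t + 1 - s))"
proof (induction t rule: induct_nat_012)
  case 1
  then show ?case using rec[of 1] a0 by (simp add: algebra_simps)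
next
  case (ge2 n)
  let ?U = "lucas_U P Q" and ?S = "\<lambda>t. \<Sum>s=1..t. f s * lucas_U P Q (t + 1 - s)"
  have IH: "a (n + 1) = a 1 * ?U (n + 1) + ?S n" "a (n + 2) = a 1 * ?U (n + 2) + ?S (n + 1)"
    using ge2 by (simp_all add: eval_nat_numeral)
  have "a (n + 3) = P * a (n + 2) - Q * a (n + 1) + f (n + 2)"
    using rec[of "n + 2"] by (simp add: eval_nat_numeral)
  also have "\<dots> = a 1 * (P * ?U (n + 2) - Q * ?U (n + 1)) + (P * ?S (n + 1) - Q * ?S n + f (n + 2))"
    unfolding IH by (simp add: algebra_simps)
  also have "\<dots> = a 1 * ?U (n + 3) + ?S (n + 2)"
    using lucas_U_convolution_step[where f = f and n = n and P = P and Q = Q]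
    by (simp add: eval_nat_numeral)
  finally show ?case
    by (simp add: eval_nat_numeral)
qed simp

lemma lucas_U_Binet_csqrt:
  fixes p c :: real
  assumes "c \<noteq> p\<^sup>2"
  defines "u \<equiv> complex_of_real p + csqrt (complex_of_real (p\<^sup>2 - c))"
    and "v \<equiv> complex_of_real p - csqrt (complex_of_real (p\<^sup>2 - c))"
  shows "complex_of_real (lucas_U (2 * p) c n) = (u ^ n - v ^ n) / (u - v)"
proof -
  let ?w = "csqrt (complex_of_real (p\<^sup>2 - c))"
  have "p\<^sup>2 - c \<noteq> 0"
    using assms(1) by simp
  then have "?w \<noteq> 0"
    by (simp only: csqrt_eq_0 of_real_eq_0_iff) simp
  then have "u \<noteq> v"
    unfolding u_def v_def by simp
  moreover have "u + v = of_real (2 * p)" "u * v = of_real c"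
    unfolding u_def v_def by (simp_all add: algebra_simps power2_eq_square[symmetric])
  ultimately show ?thesis
    using lucas_U_Binet[of u v n] by (simp add: of_real_lucas_U)
qed

lemma lucas_U_sin_arccos_sqrt:
  fixes \<rho> :: real
  assumes "0 < \<rho>" "\<rho> \<le> 1"
  defines "\<theta> \<equiv> arccos (sqrt \<rho>)"
  shows "lucas_U (2 * \<rho>) \<rho> (Suc n) * sin \<theta> = \<rho> powr (real n / 2) * sin (real (Suc n) * \<theta>)"
proof -
  have "0 \<le> sqrt \<rho>" "sqrt \<rho> \<le> 1"
    using assms by simp_all
  then have "cos \<theta> = sqrt \<rho>"
    unfolding \<theta>_def by (intro cos_arccos) linarith+
  then have "lucas_U (2 * \<rho>) \<rho> (Suc n) = lucas_U (2 * sqrt \<rho> * cos \<theta>) ((sqrt \<rho>)\<^sup>2) (Suc n)"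
    using assms by (simp add: mult.assoc)
  moreover have "sqrt \<rho> ^ n = \<rho> powr (real n / 2)"
    using assms by (simp add: powr_half_sqrt[symmetric] powr_realpow[symmetric] powr_powr)
  ultimately show ?thesis
    using lucas_U_sin[of "sqrt \<rho>" \<theta> n] by simp
qed

theorem lemma3:
  fixes \<rho> :: real and a b :: "nat \<Rightarrow> real"
  assumes hrho: "(-1/3 < \<rho> \<and> \<rho> < 0) \<or> (0 < \<rho> \<and> \<rho> < 1)"
    and ha0: "a 0 = 0" and hb0: "b 0 = 0" and h1: "a 1 = b 1"
    and hrec: "\<And>t. t \<ge> 1 \<Longrightarrow> a (t + 1) = \<rho> * (2 * a t - a (t - 1)) + b t - b (t - 1)"
  shows "(\<forall>t::nat.
           (let \<beta> = (\<lambda>s. b s - b (s - 1));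
                u = complex_of_real \<rho> + csqrt (complex_of_real (\<rho>\<^sup>2 - \<rho>));
                v = complex_of_real \<rho> - csqrt (complex_of_real (\<rho>\<^sup>2 - \<rho>))
            in complex_of_real (a (t + 1)) =
               complex_of_real (a 1) * (u ^ (t + 1) - v ^ (t + 1)) / (u - v)
               + (\<Sum>s = 1..t. complex_of_real (\<beta> s) * (u ^ (t - s + 1) - v ^ (t - s + 1)) / (u - v))))
       \<and> (0 < \<rho> \<longrightarrow>
          (\<forall>t::nat.
           (let \<beta> = (\<lambda>s. b s - b (s - 1)); \<theta> = arccos (sqrt \<rho>)
            in a (t + 1) * sin \<theta> =
               a 1 * \<rho> powr (real t / 2) * sin (real (t + 1) * \<theta>)
               + (\<Sum>s = 1..t. \<beta> s * \<rho> powr ((real t - real s) / 2) * sin ((real t + 1 - real s) * \<theta>)))))"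
proof -
  let ?\<beta> = "\<lambda>s. b s - b (s - 1)" and ?U = "lucas_U (2 * \<rho>) \<rho>"
  have solution: "a (t + 1) = a 1 * ?U (t + 1) + (\<Sum>s=1..t. ?\<beta> s * ?U (t + 1 - s))" for t
  proof (rule linear_recurrence_solution[where f = ?\<beta>])
    show "a (t + 1) = 2 * \<rho> * a t - \<rho> * a (t - 1) + ?\<beta> t" if "t \<ge> 1" for t
      using hrec[OF that] by (simp add: algebra_simps)
  qed (rule ha0)
  have "\<rho> \<noteq> \<rho>\<^sup>2"
    using hrho by (auto simp: power2_eq_square)
  note Binet = lucas_U_Binet_csqrt[OF this]
  have complex_form: "complex_of_real (a (t + 1))
        = of_real (a 1) * of_real (?U (t + 1)) + (\<Sum>s=1..t. of_real (?\<beta> s) * of_real (?U (t - s + 1)))" for t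
    unfolding solution[of t] by (auto simp: Suc_diff_le intro!: sum.cong)
  have trig_form: "a (t + 1) * sin \<theta>
        = a 1 * \<rho> powr (real t / 2) * sin (real (t + 1) * \<theta>)
          + (\<Sum>s=1..t. ?\<beta> s * \<rho> powr ((real t - real s) / 2) * sin ((real t + 1 - real s) * \<theta>))"
    if "0 < \<rho>" and \<theta>: "\<theta> = arccos (sqrt \<rho>)" for t \<theta>
  proof -
    have "a (t + 1) * sin \<theta>
          = a 1 * (?U (Suc t) * sin \<theta>) + (\<Sum>s=1..t. ?\<beta> s * (?U (Suc (t - s)) * sin \<theta>))"
      unfolding solution[of t] distrib_right sum_distrib_right
      by (auto simp: Suc_diff_le mult.assoc intro!: sum.cong)
    also have "\<dots> = a 1 * \<rho> powr (real t / 2) * sin (real (t + 1) * \<theta>)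
          + (\<Sum>s=1..t. ?\<beta> s * \<rho> powr ((real t - real s) / 2) * sin ((real t + 1 - real s) * \<theta>))"
      using hrho that unfolding \<theta>
      by (auto simp: lucas_U_sin_arccos_sqrt mult.assoc of_nat_diff add_diff_eq add_ac intro!: sum.cong)
    finally show ?thesis .
  qed
  show ?thesis
    unfolding Let_def complex_form Binet
    using trig_form by (simp add: times_divide_eq_right)
qed

end
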